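(* Let $D' \in \mathrm{Sym}_n(\mathbb{R}_{\geq 0})$ and let $D^A$ be the all pairs shortest path matrix of the complete weighted graph $K_n(D')$. Then for every entrywise $\ell_p$ norm, $D^A$ is a solution of \[\operatorname{argmin}\{\|D-D'\|_p : D \text{ metric},\ D \preceq D'\}.\] In particular (taking $p=1$), $D^A$ is the minimal $\ell_1$ norm decrease only metric repair. *)

theory Defs
  imports Complex_Main
begin

text \<open>Matrices indexed by a finite type 'n (the vertex set {1..n} of K_n).\<close>

definition sym_nonneg :: "('n \<Rightarrow> 'n \<Rightarrow> real) \<Rightarrow> bool" where
  "sym_nonneg D \<longleftrightarrow> (\<forall>i j. D i j = D j i \<and> 0 \<le> D i j)"

text \<open>Metric matrix (zero distances between distinct points allowed).\<close>
definition is_metric :: "('n \<Rightarrow> 'n \<Rightarrow> real) \<Rightarrow> bool" where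
  "is_metric D \<longleftrightarrow> (\<forall>i j. 0 \<le> D i j \<and> D i j = D j i) \<and> (\<forall>i. D i i = 0)
     \<and> (\<forall>i j k. D i k \<le> D i j + D j k)"

definition entry_le :: "('n \<Rightarrow> 'n \<Rightarrow> real) \<Rightarrow> ('n \<Rightarrow> 'n \<Rightarrow> real) \<Rightarrow> bool" where
  "entry_le D E \<longleftrightarrow> (\<forall>i j. D i j \<le> E i j)"

text \<open>Weight of a walk (list of vertices) in the complete weighted graph K_n(D).\<close>
fun walk_weight :: "('n \<Rightarrow> 'n \<Rightarrow> real) \<Rightarrow> 'n list \<Rightarrow> real" where
  "walk_weight D (x # y # xs) = D x y + walk_weight D (y # xs)"
| "walk_weight D _ = 0"

definition apsp :: "('n \<Rightarrow> 'n \<Rightarrow> real) \<Rightarrow> 'n \<Rightarrow> 'n \<Rightarrow> real" where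
  "apsp D i j = Inf {walk_weight D ps | ps. ps \<noteq> [] \<and> hd ps = i \<and> last ps = j}"

definition lp_norm :: "real \<Rightarrow> ('n::finite \<Rightarrow> 'n \<Rightarrow> real) \<Rightarrow> real" where
  "lp_norm p M = (\<Sum>i\<in>UNIV. \<Sum>j\<in>UNIV. \<bar>M i j\<bar> powr p) powr (1 / p)"

definition linf_norm :: "('n::finite \<Rightarrow> 'n \<Rightarrow> real) \<Rightarrow> real" where
  "linf_norm M = Max {\<bar>M i j\<bar> | i j. True}"

end

theory Submission
  imports Defs
begin

text \<open>By the triangle inequality, a metric \<open>D \<le> D'\<close> is bounded on the endpoints of every walk
  by the walk's \<open>D'\<close>-weight, hence \<open>D \<le> apsp D'\<close>: the shortest path matrix is the largest
  metric below \<open>D'\<close>. So \<open>0 \<le> D' - apsp D' \<le> D' - D\<close> entrywise, and every norm that is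
  monotone in the absolute values of the entries is minimised by \<open>apsp D'\<close>.\<close>

lemma walk_weight_nonneg: "(\<And>i j. 0 \<le> D i j) \<Longrightarrow> 0 \<le> walk_weight D ps"
  by (induction D ps rule: walk_weight.induct) auto

lemma walk_weight_mono: "(\<And>i j. D i j \<le> E i j) \<Longrightarrow> walk_weight D ps \<le> walk_weight E ps"
  by (induction D ps rule: walk_weight.induct) (auto intro: add_mono)

lemma walk_weight_append:
  "xs \<noteq> [] \<Longrightarrow> ys \<noteq> [] \<Longrightarrow>
   walk_weight D (xs @ ys) = walk_weight D xs + D (last xs) (hd ys) + walk_weight D ys"
proof (induction xs)
  case (Cons x xs)
  then show ?case by (cases xs; cases ys) auto
qed simp

lemma walk_weight_join:
  assumes "p \<noteq> []" "q \<noteq> []" "last p = hd q"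
  shows "walk_weight D (p @ tl q) = walk_weight D p + walk_weight D q"
proof (cases "tl q = []")
  case True
  then show ?thesis using assms(2) by (cases q) auto
next
  case False
  then show ?thesis using assms walk_weight_append[of p "tl q" D]
    by (cases q; cases "tl q") auto
qed

lemma walk_weight_rev:
  "(\<And>i j. D i j = D j i) \<Longrightarrow> walk_weight D (rev ps) = walk_weight D ps"
proof (induction D ps rule: walk_weight.induct)
  case (1 D x y xs)
  have "walk_weight D (rev (x # y # xs)) = walk_weight D (rev (y # xs) @ [x])" by simp
  also have "\<dots> = walk_weight D (rev (y # xs)) + D y x"
    by (subst walk_weight_append) (auto simp: last_rev)
  finally show ?case using 1 by (simp add: "1.prems"[of y x])
qed auto

lemma metric_le_walk_weight:
  "is_metric D \<Longrightarrow> ps \<noteq> [] \<Longrightarrow> D (hd ps) (last ps) \<le> walk_weight D ps"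
proof (induction D ps rule: walk_weight.induct)
  case (1 D x y xs)
  then have "D x (last (y # xs)) \<le> D x y + D y (last (y # xs))"
    unfolding is_metric_def by blast
  with 1 show ?case by simp
qed (auto simp: is_metric_def)

lemma apsp_le_walk_weight:
  assumes "\<And>i j. 0 \<le> D i j" "ps \<noteq> []" "hd ps = i" "last ps = j"
  shows "apsp D i j \<le> walk_weight D ps"
  unfolding apsp_def
proof (rule cInf_lower)
  show "walk_weight D ps \<in> {walk_weight D ps | ps. ps \<noteq> [] \<and> hd ps = i \<and> last ps = j}"
    using assms by blast
  show "bdd_below {walk_weight D ps | ps. ps \<noteq> [] \<and> hd ps = i \<and> last ps = j}"
    using walk_weight_nonneg[of D, OF assms(1)] by (auto simp: bdd_below_def)
qed

lemma apsp_greatest: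
  "(\<And>ps. ps \<noteq> [] \<Longrightarrow> hd ps = i \<Longrightarrow> last ps = j \<Longrightarrow> c \<le> walk_weight D ps) \<Longrightarrow> c \<le> apsp D i j"
  unfolding apsp_def by (rule cInf_greatest) (auto intro!: exI[of _ "[i, j]"])

lemma apsp_le_entry: "(\<And>i j. 0 \<le> D i j) \<Longrightarrow> apsp D i j \<le> D i j"
  using apsp_le_walk_weight[of D "[i, j]" i j] by simp

lemma apsp_triangle:
  assumes nonneg: "\<And>i j. 0 \<le> D i j"
  shows "apsp D i k \<le> apsp D i j + apsp D j k"
proof -
  have "apsp D i k - apsp D j k \<le> apsp D i j"
  proof (rule apsp_greatest)
    fix p assume p: "p \<noteq> []" "hd p = i" "last p = j"
    have "apsp D i k - walk_weight D p \<le> apsp D j k"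
    proof (rule apsp_greatest)
      fix q assume q: "q \<noteq> []" "hd q = j" "last q = k"
      have "last (p @ tl q) = k"
        using p q by (cases q; cases "tl q") (auto simp: last_tl)
      then have "apsp D i k \<le> walk_weight D (p @ tl q)"
        using p by (intro apsp_le_walk_weight nonneg) auto
      also have "\<dots> = walk_weight D p + walk_weight D q"
        using p q by (intro walk_weight_join) auto
      finally show "apsp D i k - walk_weight D p \<le> walk_weight D q" by simp
    qed
    then show "apsp D i k - apsp D j k \<le> walk_weight D p" by simp
  qed
  then show ?thesis by simp
qed

lemma apsp_sym:
  assumes "sym_nonneg D"
  shows "apsp D i j = apsp D j i"
proof -
  have "apsp D i j \<le> apsp D j i" for i j
  proof (rule apsp_greatest)
    fix ps assume "ps \<noteq> []" "hd ps = j" "last ps = i"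
    then have "apsp D i j \<le> walk_weight D (rev ps)"
      using assms by (intro apsp_le_walk_weight) (auto simp: sym_nonneg_def hd_rev last_rev)
    also have "\<dots> = walk_weight D ps"
      using assms by (intro walk_weight_rev) (simp add: sym_nonneg_def)
    finally show "apsp D i j \<le> walk_weight D ps" .
  qed
  then show ?thesis by (simp add: order_antisym)
qed

lemma is_metric_apsp:
  assumes "sym_nonneg D"
  shows "is_metric (apsp D)"
proof -
  have nonneg: "\<And>i j. 0 \<le> D i j" using assms by (simp add: sym_nonneg_def)
  have "0 \<le> apsp D i j" for i j
    by (rule apsp_greatest) (simp add: walk_weight_nonneg nonneg)
  moreover have "apsp D i i = 0" for i
    using apsp_le_walk_weight[of D "[i]" i i, OF nonneg] \<open>0 \<le> apsp D i i\<close> by simp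
  ultimately show ?thesis
    unfolding is_metric_def using apsp_sym[OF assms] apsp_triangle[of D, OF nonneg] by blast
qed

lemma metric_below_le_apsp:
  assumes "is_metric D" "entry_le D D'"
  shows "D i j \<le> apsp D' i j"
proof (rule apsp_greatest)
  fix ps assume "ps \<noteq> []" "hd ps = i" "last ps = j"
  then have "D i j \<le> walk_weight D ps" using metric_le_walk_weight[OF assms(1)] by metis
  also have "\<dots> \<le> walk_weight D' ps"
    using assms(2) by (intro walk_weight_mono) (simp add: entry_le_def)
  finally show "D i j \<le> walk_weight D' ps" .
qed

lemma lp_norm_mono:
  assumes "p \<ge> 1" "\<And>i j. \<bar>A i j\<bar> \<le> \<bar>B i j\<bar>"
  shows "lp_norm p A \<le> lp_norm p B"
  unfolding lp_norm_def using assms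
  by (intro powr_mono2 sum_mono sum_nonneg) auto

lemma linf_norm_mono:
  fixes A B :: "'n::finite \<Rightarrow> 'n \<Rightarrow> real"
  assumes "\<And>i j. \<bar>A i j\<bar> \<le> \<bar>B i j\<bar>"
  shows "linf_norm A \<le> linf_norm B"
proof -
  have finite_entries: "finite {\<bar>M i j\<bar> | i j. True}" for M :: "'n \<Rightarrow> 'n \<Rightarrow> real"
    using finite_image_set2[of "\<lambda>_. True" "\<lambda>_. True" "\<lambda>i j. \<bar>M i j\<bar>"] by simp
  have "\<bar>A i j\<bar> \<le> Max {\<bar>B i j\<bar> | i j. True}" for i j
    using assms[of i j] Max_ge[OF finite_entries, of "\<bar>B i j\<bar>" B] by fastforce
  then show ?thesis
    unfolding linf_norm_def by (subst Max_le_iff[OF finite_entries]) auto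
qed

theorem mainTheorem2:
  fixes D' :: "'n::finite \<Rightarrow> 'n \<Rightarrow> real"
  assumes "sym_nonneg D'"
  shows "is_metric (apsp D') \<and> entry_le (apsp D') D'
    \<and> (\<forall>p::real. p \<ge> 1 \<longrightarrow> (\<forall>D. is_metric D \<and> entry_le D D' \<longrightarrow>
          lp_norm p (\<lambda>i j. apsp D' i j - D' i j) \<le> lp_norm p (\<lambda>i j. D i j - D' i j)))
    \<and> (\<forall>D. is_metric D \<and> entry_le D D' \<longrightarrow>
          linf_norm (\<lambda>i j. apsp D' i j - D' i j) \<le> linf_norm (\<lambda>i j. D i j - D' i j))"
proof -
  have below: "apsp D' i j \<le> D' i j" for i j
    using assms by (intro apsp_le_entry) (simp add: sym_nonneg_def)
  have closer: "\<bar>apsp D' i j - D' i j\<bar> \<le> \<bar>D i j - D' i j\<bar>"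
    if "is_metric D" "entry_le D D'" for D i j
    using metric_below_le_apsp[OF that, of i j] below[of i j] by linarith
  show ?thesis
    using is_metric_apsp[OF assms] below closer
    by (auto simp: entry_le_def intro!: lp_norm_mono linf_norm_mono)
qed

end
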